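(* Let $\mathbf i$ be a reduced expression of $w_0$ whose standard seed satisfies properties (A), (B) and (C). Then for every $i,j\in J_{ex}(\mathbf i)$: if $i>j$ then $(\beta_i;P_j)=0$, and $(\beta_i;P_i)=1$.
   Context: $\mathfrak g$ is a complex simple Lie algebra of simply-laced type, vertex set $I=\{1,\dots,n\}$, Cartan entries $i\cdot j$, Weyl group with simple reflections $s_i$, longest element $w_0$, $N=\ell(w_0)$, fundamental weights $\omega_i$. $\overline D:\mathbb C[\mathsf N]\to\mathbb C(\alpha_1,\dots,\alpha_n)$ is the algebra morphism $\overline D(f)=\sum_{\mathbf j}(f,e_{j_1}\cdots e_{j_r})\big(\alpha_{j_1}(\alpha_{j_1}+\alpha_{j_2})\cdots(\alpha_{j_1}+\dots+\alpha_{j_r})\big)^{-1}$ ($\mathbb C[\mathsf N]$ identified with the graded dual of $U(\mathfrak n)$, $e_i$ Chevalley generators, $\alpha_i$ indeterminates). Positive roots are linear forms in the $\alpha_i$; $(\beta;P)$ = multiplicity of $\beta$ in $P$. For a reduced expression $\mathbf i$: $\beta_j=s_{i_1}\cdots s_{i_{j-1}}(\alpha_{i_j})$; $j_-(\mathbf i)=\max(\{l<j:i_l=i_j\}\cup\{0\})$; $j_+(\mathbf i)=\min(\{l>j:i_l=i_j\}\cup\{N+1\})$; $J_{ex}(\mathbf i)=\{j:j_+(\mathbf i)\le N\}$; flag minors $x_j=D(s_{i_1}\cdots s_{i_j}\omega_{i_j},\omega_{i_j})$ (unipotent minors). Properties: (A) $\overline D(x_j)=1/P_j$ with $P_j$ a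 product of positive roots, for all $j$; (B) $P_jP_{j_-}=\beta_j\prod_{l<j<l_+,\,i_l\cdot i_j=-1}P_l$ for all $j$, with $P_0=1$; (C) $(\beta_i;P_j)-(\beta_i;P_{j_+})\le1$ for all $j\in J_{ex}$, $1\le i\le N$. *)

theory Defs
  imports Complex_Main "HOL-Library.Multiset"
begin

text \<open>Root lattice: vectors of integer coefficients on the simple roots, indexed by the
vertex set {1..n}; a vector v stands for the linear form sum_k v k * alpha_k.
The Cartan matrix is C :: nat => nat => int, with C i j the entry i . j.\<close>

type_synonym rootvec = "nat \<Rightarrow> int"

definition simply_laced_simple_cartan :: "nat \<Rightarrow> (nat \<Rightarrow> nat \<Rightarrow> int) \<Rightarrow> bool" where
  "simply_laced_simple_cartan n C \<longleftrightarrow>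
     n \<ge> 1 \<and>
     (\<forall>i\<in>{1..n}. C i i = 2) \<and>
     (\<forall>i\<in>{1..n}. \<forall>j\<in>{1..n}. i \<noteq> j \<longrightarrow> C i j \<in> {0, -1}) \<and>
     (\<forall>i\<in>{1..n}. \<forall>j\<in>{1..n}. C i j = C j i) \<and>
     (\<forall>v :: nat \<Rightarrow> real. (\<exists>k\<in>{1..n}. v k \<noteq> 0) \<longrightarrow>
        (\<Sum>a\<in>{1..n}. \<Sum>b\<in>{1..n}. v a * of_int (C a b) * v b) > 0) \<and>
     (\<forall>i\<in>{1..n}. \<forall>j\<in>{1..n}.
        (i, j) \<in> ({(a, b). a \<in> {1..n} \<and> b \<in> {1..n} \<and> C a b = -1})\<^sup>*)"

definition simple_root :: "nat \<Rightarrow> rootvec" where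
  "simple_root i = (\<lambda>k. if k = i then 1 else 0)"

text \<open>Simple reflection s_i(v) = v - (v . alpha_i) alpha_i.\<close>
definition sref :: "nat \<Rightarrow> (nat \<Rightarrow> nat \<Rightarrow> int) \<Rightarrow> nat \<Rightarrow> rootvec \<Rightarrow> rootvec" where
  "sref n C i v = (\<lambda>k. v k - (if k = i then (\<Sum>a\<in>{1..n}. v a * C a i) else 0))"

fun wprod :: "nat \<Rightarrow> (nat \<Rightarrow> nat \<Rightarrow> int) \<Rightarrow> nat list \<Rightarrow> rootvec \<Rightarrow> rootvec" where
  "wprod n C [] = id"
| "wprod n C (a # ws) = sref n C a \<circ> wprod n C ws"

definition weyl_group :: "nat \<Rightarrow> (nat \<Rightarrow> nat \<Rightarrow> int) \<Rightarrow> (rootvec \<Rightarrow> rootvec) set" where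
  "weyl_group n C = {wprod n C ws | ws. set ws \<subseteq> {1..n}}"

definition wlen :: "nat \<Rightarrow> (nat \<Rightarrow> nat \<Rightarrow> int) \<Rightarrow> (rootvec \<Rightarrow> rootvec) \<Rightarrow> nat" where
  "wlen n C w = (LEAST k. \<exists>ws. set ws \<subseteq> {1..n} \<and> length ws = k \<and> wprod n C ws = w)"

definition reduced_expr_w0 :: "nat \<Rightarrow> (nat \<Rightarrow> nat \<Rightarrow> int) \<Rightarrow> nat list \<Rightarrow> bool" where
  "reduced_expr_w0 n C ws \<longleftrightarrow>
     set ws \<subseteq> {1..n} \<and>
     length ws = wlen n C (wprod n C ws) \<and>
     (\<forall>w\<in>weyl_group n C. wlen n C w \<le> wlen n C (wprod n C ws))"

definition positive_roots :: "nat \<Rightarrow> (nat \<Rightarrow> nat \<Rightarrow> int) \<Rightarrow> rootvec set" where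
  "positive_roots n C = {v. (\<exists>w\<in>weyl_group n C. \<exists>i\<in>{1..n}. v = w (simple_root i)) \<and> (\<forall>k. v k \<ge> 0)}"

text \<open>Letters of the word, 1-indexed: i_j.\<close>
definition letter :: "nat list \<Rightarrow> nat \<Rightarrow> nat" where
  "letter ws j = ws ! (j - 1)"

definition beta :: "nat \<Rightarrow> (nat \<Rightarrow> nat \<Rightarrow> int) \<Rightarrow> nat list \<Rightarrow> nat \<Rightarrow> rootvec" where
  "beta n C ws j = wprod n C (take (j - 1) ws) (simple_root (letter ws j))"

definition jminus :: "nat list \<Rightarrow> nat \<Rightarrow> nat" where
  "jminus ws j = Max ({l. 1 \<le> l \<and> l < j \<and> letter ws l = letter ws j} \<union> {0})"

definition jplus :: "nat list \<Rightarrow> nat \<Rightarrow> nat" where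
  "jplus ws j = Min ({l. j < l \<and> l \<le> length ws \<and> letter ws l = letter ws j} \<union> {length ws + 1})"

definition J_ex :: "nat list \<Rightarrow> nat set" where
  "J_ex ws = {j. 1 \<le> j \<and> j \<le> length ws \<and> jplus ws j \<le> length ws}"

text \<open>Property (A) (the part expressible without the map D-bar): each P_j is a
(multiset) product of positive roots.\<close>
definition propA :: "nat \<Rightarrow> (nat \<Rightarrow> nat \<Rightarrow> int) \<Rightarrow> nat list \<Rightarrow> (nat \<Rightarrow> rootvec multiset) \<Rightarrow> bool" where
  "propA n C ws P \<longleftrightarrow> (\<forall>j\<in>{1..length ws}. set_mset (P j) \<subseteq> positive_roots n C)"

definition propB :: "nat \<Rightarrow> (nat \<Rightarrow> nat \<Rightarrow> int) \<Rightarrow> nat list \<Rightarrow> (nat \<Rightarrow> rootvec multiset) \<Rightarrow> bool" where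
  "propB n C ws P \<longleftrightarrow> P 0 = {#} \<and>
     (\<forall>j\<in>{1..length ws}. P j + P (jminus ws j) =
        {# beta n C ws j #} +
        (\<Sum>l\<in>{l. 1 \<le> l \<and> l < j \<and> j < jplus ws l \<and> C (letter ws l) (letter ws j) = -1}. P l))"

definition propC :: "nat \<Rightarrow> (nat \<Rightarrow> nat \<Rightarrow> int) \<Rightarrow> nat list \<Rightarrow> (nat \<Rightarrow> rootvec multiset) \<Rightarrow> bool" where
  "propC n C ws P \<longleftrightarrow> (\<forall>j\<in>J_ex ws. \<forall>i\<in>{1..length ws}.
      int (count (P j) (beta n C ws i)) - int (count (P (jplus ws j)) (beta n C ws i)) \<le> 1)"

end

theory Submission
  imports Defs
begin

(* Unwinding (B) shows by induction on j that every root occurring in P_j is one of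
   beta_1, ..., beta_j.  Since the word is reduced, beta_1, ..., beta_N are pairwise distinct:
   beta_k = beta_i with k < i forces s_{i_(k+1)} ... s_{i_(i-1)} (alpha_{i_i}) = - alpha_{i_k},
   so s_{i_k} commutes past that segment onto s_{i_i} and the two letters cancel, giving a
   shorter word for the same Weyl group element.  Hence beta_i does not occur in P_j for
   j < i, and comparing multiplicities of beta_i on both sides of (B) at position i gives
   (beta_i; P_i) = 1. *)

definition cartan_form :: "nat \<Rightarrow> (nat \<Rightarrow> nat \<Rightarrow> int) \<Rightarrow> rootvec \<Rightarrow> rootvec \<Rightarrow> int" where
  "cartan_form n C u v = (\<Sum>a\<in>{1..n}. \<Sum>b\<in>{1..n}. u a * C a b * v b)"

lemma cartan_form_simple_root_right:
  "m \<in> {1..n} \<Longrightarrow> cartan_form n C v (simple_root m) = (\<Sum>a\<in>{1..n}. v a * C a m)"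
  unfolding cartan_form_def simple_root_def by (simp add: if_distrib cong: if_cong)

lemma cartan_form_diff_left:
  "cartan_form n C (\<lambda>k. u k - c * x k) v = cartan_form n C u v - c * cartan_form n C x v"
  unfolding cartan_form_def by (simp add: algebra_simps sum_subtractf sum_distrib_left)

lemma cartan_form_diff_right:
  "cartan_form n C u (\<lambda>k. v k - c * x k) = cartan_form n C u v - c * cartan_form n C u x"
  unfolding cartan_form_def by (simp add: algebra_simps sum_subtractf sum_distrib_left)

lemma cartan_form_uminus_right: "cartan_form n C u (\<lambda>k. - v k) = - cartan_form n C u v"
  unfolding cartan_form_def by (simp add: sum_negf)

lemma sref_eq_reflection:
  "i \<in> {1..n} \<Longrightarrow>
   sref n C i v = (\<lambda>k. v k - cartan_form n C v (simple_root i) * simple_root i k)"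
  by (rule ext) (simp add: sref_def cartan_form_simple_root_right, simp add: simple_root_def)

lemma wprod_append: "wprod n C (xs @ ys) = wprod n C xs \<circ> wprod n C ys"
  by (induction xs) auto

lemma wlen_wprod_le_length: "set ws \<subseteq> {1..n} \<Longrightarrow> wlen n C (wprod n C ws) \<le> length ws"
  unfolding wlen_def by (rule Least_le) blast

lemma take_eq_take_nth_take_drop:
  assumes "k < i" and "k < length xs"
  shows "take i xs = take k xs @ xs ! k # take (i - Suc k) (drop (Suc k) xs)"
proof -
  have "take i xs = take (Suc k) xs @ take (i - Suc k) (drop (Suc k) xs)"
    using take_add[of "Suc k" "i - Suc k" xs] assms(1) by simp
  then show ?thesis using take_Suc_conv_app_nth[OF assms(2)] by simp
qed

locale symmetric_cartan =
  fixes n :: nat and C :: "nat \<Rightarrow> nat \<Rightarrow> int"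
  assumes cartan_diag: "i \<in> {1..n} \<Longrightarrow> C i i = 2"
    and cartan_sym: "i \<in> {1..n} \<Longrightarrow> j \<in> {1..n} \<Longrightarrow> C i j = C j i"
begin

lemma cartan_form_commute: "cartan_form n C u v = cartan_form n C v u"
  unfolding cartan_form_def
  by (subst sum.swap) (intro sum.cong refl, simp add: cartan_sym algebra_simps)

lemma cartan_form_simple_root_self: "i \<in> {1..n} \<Longrightarrow> cartan_form n C (simple_root i) (simple_root i) = 2"
  by (simp add: cartan_form_simple_root_right)
    (simp add: cartan_diag simple_root_def if_distrib[of "\<lambda>x. x * _"] cong: if_cong)

lemma cartan_form_sref:
  "i \<in> {1..n} \<Longrightarrow> cartan_form n C (sref n C i u) (sref n C i v) = cartan_form n C u v"
  unfolding sref_eq_reflection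
  by (simp only: cartan_form_diff_left cartan_form_diff_right cartan_form_simple_root_self
      cartan_form_commute[of "simple_root i" v]) (simp add: algebra_simps)

lemma sref_diff:
  "i \<in> {1..n} \<Longrightarrow> sref n C i (\<lambda>k. u k - c * x k) = (\<lambda>k. sref n C i u k - c * sref n C i x k)"
  unfolding sref_eq_reflection by (rule ext) (simp add: cartan_form_diff_left algebra_simps)

lemma sref_sref: "i \<in> {1..n} \<Longrightarrow> sref n C i (sref n C i v) = v"
  unfolding sref_eq_reflection
  by (rule ext) (simp only: cartan_form_diff_left cartan_form_simple_root_self, simp add: algebra_simps)

lemma sref_simple_root_self: "i \<in> {1..n} \<Longrightarrow> sref n C i (simple_root i) = (\<lambda>k. - simple_root i k)"
  unfolding sref_eq_reflection by (rule ext) (simp add: cartan_form_simple_root_self)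

lemma wprod_diff:
  "set ws \<subseteq> {1..n} \<Longrightarrow>
   wprod n C ws (\<lambda>k. u k - c * x k) = (\<lambda>k. wprod n C ws u k - c * wprod n C ws x k)"
  by (induction ws) (auto simp: sref_diff)

lemma cartan_form_wprod:
  "set ws \<subseteq> {1..n} \<Longrightarrow> cartan_form n C (wprod n C ws u) (wprod n C ws v) = cartan_form n C u v"
  by (induction ws) (auto simp: cartan_form_sref)

lemma inj_wprod: "set ws \<subseteq> {1..n} \<Longrightarrow> inj (wprod n C ws)"
proof (induction ws)
  case (Cons a ws)
  then have "inj (sref n C a)"
    by (intro inj_on_inverseI[where g = "sref n C a"]) (simp add: sref_sref)
  with Cons have "inj (sref n C a \<circ> wprod n C ws)"
    by (intro inj_compose) auto
  then show ?case by (simp only: wprod.simps(2))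
qed simp

text \<open>The reflection in the root w(alpha_m) is w s_m w^-1; here that root is - alpha_p.\<close>
lemma sref_wprod_commute:
  assumes p: "p \<in> {1..n}" and m: "m \<in> {1..n}" and U: "set U \<subseteq> {1..n}"
    and root: "wprod n C U (simple_root m) = (\<lambda>k. - simple_root p k)"
  shows "sref n C p \<circ> wprod n C U = wprod n C U \<circ> sref n C m"
proof
  fix v
  have "simple_root p = (\<lambda>k. - wprod n C U (simple_root m) k)"
    using root by simp
  then have "cartan_form n C (wprod n C U v) (simple_root p) = - cartan_form n C v (simple_root m)"
    by (simp only: cartan_form_uminus_right cartan_form_wprod[OF U])
  then show "(sref n C p \<circ> wprod n C U) v = (wprod n C U \<circ> sref n C m) v"
    unfolding comp_def sref_eq_reflection[OF p] sref_eq_reflection[OF m] wprod_diff[OF U] root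
    by auto
qed

lemma wprod_cancel_pair:
  assumes "p \<in> {1..n}" and m: "m \<in> {1..n}" and "set U \<subseteq> {1..n}"
    and "wprod n C U (simple_root m) = (\<lambda>k. - simple_root p k)"
  shows "wprod n C (p # U @ [m]) = wprod n C U"
proof -
  have "wprod n C (p # U @ [m]) = (sref n C p \<circ> wprod n C U) \<circ> sref n C m"
    by (simp add: wprod_append comp_assoc)
  also have "\<dots> = wprod n C U"
    unfolding sref_wprod_commute[OF assms] by (auto simp: sref_sref[OF m])
  finally show ?thesis .
qed

lemma root_sequence_distinct:
  assumes ws: "set ws \<subseteq> {1..n}" and reduced: "length ws = wlen n C (wprod n C ws)"
    and "k < i" and "i < length ws"
  shows "wprod n C (take k ws) (simple_root (ws ! k)) \<noteq> wprod n C (take i ws) (simple_root (ws ! i))"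
proof
  define A p U m R where "A = take k ws" and "p = ws ! k"
    and "U = take (i - Suc k) (drop (Suc k) ws)" and "m = ws ! i" and "R = drop (Suc i) ws"
  have take_i: "take i ws = A @ p # U"
    unfolding A_def p_def U_def using assms by (simp add: take_eq_take_nth_take_drop)
  have ws_split: "ws = A @ p # U @ m # R"
    using id_take_nth_drop[of i ws] assms(4) unfolding take_i m_def R_def by simp
  have letters: "set A \<subseteq> {1..n}" "p \<in> {1..n}" "set U \<subseteq> {1..n}" "m \<in> {1..n}" "set R \<subseteq> {1..n}"
    using ws unfolding ws_split by auto
  assume "wprod n C (take k ws) (simple_root (ws ! k)) = wprod n C (take i ws) (simple_root (ws ! i))"
  then have "wprod n C A (simple_root p) = wprod n C A (sref n C p (wprod n C U (simple_root m)))"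
    unfolding take_i by (simp add: A_def p_def m_def wprod_append)
  then have "simple_root p = sref n C p (wprod n C U (simple_root m))"
    using inj_wprod[OF letters(1)] by (meson injD)
  then have "wprod n C U (simple_root m) = (\<lambda>k. - simple_root p k)"
    by (metis sref_sref[OF letters(2)] sref_simple_root_self[OF letters(2)])
  then have cancel: "wprod n C (p # U @ [m]) = wprod n C U"
    by (rule wprod_cancel_pair[OF letters(2) letters(4) letters(3)])
  have "wprod n C ws = wprod n C (A @ (p # U @ [m]) @ R)"
    unfolding ws_split by simp
  also have "\<dots> = wprod n C (A @ U @ R)"
    by (simp only: wprod_append cancel)
  moreover have "wlen n C (wprod n C (A @ U @ R)) \<le> length (A @ U @ R)"
    using letters by (intro wlen_wprod_le_length) auto
  ultimately show False
    using reduced unfolding ws_split by simp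
qed

lemma beta_distinct:
  assumes "set ws \<subseteq> {1..n}" and "length ws = wlen n C (wprod n C ws)"
    and "1 \<le> k" and "k < i" and "i \<le> length ws"
  shows "beta n C ws k \<noteq> beta n C ws i"
  using root_sequence_distinct[OF assms(1,2), of "k - 1" "i - 1"] assms(3-5)
  unfolding beta_def letter_def by simp

end

lemma jminus_less: "1 \<le> j \<Longrightarrow> jminus ws j < j"
  unfolding jminus_def by (subst Max_less_iff) (auto intro: finite_subset[of _ "{..<j}"])

lemma propB_mem_P_imp_beta:
  assumes B: "propB n C ws P"
  shows "j \<le> length ws \<Longrightarrow> x \<in># P j \<Longrightarrow> \<exists>k. 1 \<le> k \<and> k \<le> j \<and> x = beta n C ws k"
proof (induction j arbitrary: x rule: less_induct)
  case (less j)
  show ?case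
  proof (cases "j = 0")
    case True
    then show ?thesis using B less.prems unfolding propB_def by simp
  next
    case False
    define S where "S = {l. 1 \<le> l \<and> l < j \<and> j < jplus ws l \<and> C (letter ws l) (letter ws j) = -1}"
    have "finite S" unfolding S_def by (rule finite_subset[of _ "{..<j}"]) auto
    moreover have "P j + P (jminus ws j) = {# beta n C ws j #} + (\<Sum>l\<in>S. P l)"
      using B False less.prems unfolding propB_def S_def by auto
    then have "x \<in># {# beta n C ws j #} + (\<Sum>l\<in>S. P l)"
      using less.prems by (metis union_iff)
    ultimately consider "x = beta n C ws j" | l where "l \<in> S" "x \<in># P l"
      by (auto simp: set_mset_sum)
    then show ?thesis
    proof cases
      case 1
      then show ?thesis using False by (intro exI[of _ j]) auto
    next
      case (2 l)
      then have "l < j" unfolding S_def by auto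
      then show ?thesis using less.IH[of l x] 2 less.prems by fastforce
    qed
  qed
qed

context symmetric_cartan
begin

lemma propB_count_later_beta_eq_0:
  assumes "set ws \<subseteq> {1..n}" and "length ws = wlen n C (wprod n C ws)" and "propB n C ws P"
    and "1 \<le> i" and "i \<le> length ws" and "j < i"
  shows "count (P j) (beta n C ws i) = 0"
proof (rule ccontr)
  assume "count (P j) (beta n C ws i) \<noteq> 0"
  then obtain k where "1 \<le> k" "k \<le> j" "beta n C ws i = beta n C ws k"
    using propB_mem_P_imp_beta[OF assms(3), of j] assms(5,6) by (auto simp: not_in_iff)
  then show False
    using beta_distinct[OF assms(1,2), of k i] assms(5,6) by auto
qed

lemma propB_count_own_beta_eq_1:
  assumes "set ws \<subseteq> {1..n}" and "length ws = wlen n C (wprod n C ws)" and B: "propB n C ws P"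
    and "1 \<le> i" and "i \<le> length ws"
  shows "count (P i) (beta n C ws i) = 1"
proof -
  define S where "S = {l. 1 \<le> l \<and> l < i \<and> i < jplus ws l \<and> C (letter ws l) (letter ws i) = -1}"
  have recursion: "P i + P (jminus ws i) = {# beta n C ws i #} + (\<Sum>l\<in>S. P l)"
    using B assms(4,5) unfolding propB_def S_def by auto
  have "count (P i) (beta n C ws i) + count (P (jminus ws i)) (beta n C ws i)
      = 1 + (\<Sum>l\<in>S. count (P l) (beta n C ws i))"
    using arg_cong[OF recursion, of "\<lambda>M. count M (beta n C ws i)"] by (simp add: count_sum)
  moreover have "count (P (jminus ws i)) (beta n C ws i) = 0"
    using propB_count_later_beta_eq_0 assms jminus_less by blast
  moreover have "(\<Sum>l\<in>S. count (P l) (beta n C ws i)) = 0"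
    using propB_count_later_beta_eq_0[OF assms(1-5)] unfolding S_def by (intro sum.neutral) auto
  ultimately show ?thesis by simp
qed

end

theorem lemma6p5:
  fixes n :: nat and C :: "nat \<Rightarrow> nat \<Rightarrow> int" and ws :: "nat list"
    and P :: "nat \<Rightarrow> rootvec multiset"
  assumes "simply_laced_simple_cartan n C"
    and "reduced_expr_w0 n C ws"
    and "propA n C ws P" and "propB n C ws P" and "propC n C ws P"
  shows "(\<forall>i\<in>J_ex ws. \<forall>j\<in>J_ex ws. i > j \<longrightarrow> count (P j) (beta n C ws i) = 0)
       \<and> (\<forall>i\<in>J_ex ws. count (P i) (beta n C ws i) = 1)"
proof -
  interpret symmetric_cartan n C
    using assms(1) unfolding simply_laced_simple_cartan_def by unfold_locales auto
  have "set ws \<subseteq> {1..n}" and "length ws = wlen n C (wprod n C ws)"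
    using assms(2) unfolding reduced_expr_w0_def by auto
  then show ?thesis
    using propB_count_later_beta_eq_0 propB_count_own_beta_eq_1 assms(4) unfolding J_ex_def by auto
qed

end
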